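(* Let $\Sigma$ be a finite set of tokens, $c$ a context, $M_1,M_2,M_b$ language models, and $f$ a min-bounded function with constant $\lambda_f$. Let $t\in\Sigma$ be a token that is $\alpha$-exposed by $M_1$ over $M_b$ at $c$ and $\beta$-exposed by $M_2$ over $M_b$ at $c$. Let $M:=DAGG_f(M_1,M_2)$. Then $t$ is $\le\gamma\min(\alpha,\beta)$-exposed by $M$ over $M_b$ at $c$, where $\gamma=\lambda_f\,\overline{f_c}(M_1,M_2)$.
   Context: Let $n=|\Sigma|$. A context is a finite sequence of tokens from $\Sigma$. A language model $M$ assigns to every context $c$ and token $t\in\Sigma$ a probability $p_M(t\mid c)>0$, with $\sum_{t\in\Sigma}p_M(t\mid c)=1$. For $g:\Sigma\to\mathbb{R}_{>0}$, $GM(g(t)):=\exp\big(\tfrac1n\sum_{t\in\Sigma}\log g(t)\big)$. Typical probability: $tp_c(M):=GM(p_M(t\mid c))$; relative probability: $rp_M(t\mid c):=p_M(t\mid c)/tp_c(M)$. Typical probability ratio: $tpr_c(M_1,M_2):=GM\big(\tfrac{p_{M_1}(t\mid c)}{p_{M_2}(t\mid c)}\big)$. A token $t$ is $\alpha$-exposed by $M_1$ over $M_2$ at $c$ if $\frac{p_{M_1}(t\mid c)}{p_{M_2}(t\mid c)\cdot tpr_c(M_1,M_2)}=\alpha$; it is $\le\alpha$-exposed if it is $\beta$-exposed for some $\beta\le\alpha$. A function $f:\mathbb{R}_{>0}^2\to\mathbb{R}_{>0}$ is proper-avg if $\min(x,y)\le f(x,y)\le\max(x,y)$ for all $x,y>0$;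 it is min-bounded if it is proper-avg and there is a constant $\lambda_f$ with $f(x,y)\le\lambda_f\min(x,y)$ for all $x,y>0$. Set $M(t\mid c):=f(rp_{M_1}(t\mid c),rp_{M_2}(t\mid c))$; $DAGG_f(M_1,M_2)$ is the language model $M$ with $p_M(t\mid c):=\frac{M(t\mid c)}{\sum_{t'\in\Sigma}M(t'\mid c)}$. Define $\overline{f_c}(M_1,M_2):=GM\big(M(t\mid c)^{-1}\big)$. *)

theory Defs
  imports Complex_Main
begin

text \<open>Tokens form a finite type 'a (the alphabet Sigma, n = CARD('a)); contexts are
  finite token sequences ('a list). A language model is a function
  M :: 'a list => 'a => real with M c t = p_M(t | c).\<close>

type_synonym 'a lm = "'a list \<Rightarrow> 'a \<Rightarrow> real"

definition is_LM :: "('a::finite) lm \<Rightarrow> bool" where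
  "is_LM M \<longleftrightarrow> (\<forall>c t. M c t > 0) \<and> (\<forall>c. (\<Sum>t\<in>UNIV. M c t) = 1)"

definition GM :: "(('a::finite) \<Rightarrow> real) \<Rightarrow> real" where
  "GM g = exp ((1 / real (card (UNIV :: 'a set))) * (\<Sum>t\<in>UNIV. ln (g t)))"

definition tp :: "('a::finite) lm \<Rightarrow> 'a list \<Rightarrow> real" where
  "tp M c = GM (\<lambda>t. M c t)"

definition rp :: "('a::finite) lm \<Rightarrow> 'a list \<Rightarrow> 'a \<Rightarrow> real" where
  "rp M c t = M c t / tp M c"

definition tpr :: "('a::finite) lm \<Rightarrow> 'a lm \<Rightarrow> 'a list \<Rightarrow> real" where
  "tpr M1 M2 c = GM (\<lambda>t. M1 c t / M2 c t)"

definition exposed :: "('a::finite) lm \<Rightarrow> 'a lm \<Rightarrow> 'a list \<Rightarrow> 'a \<Rightarrow> real \<Rightarrow> bool" where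
  "exposed M1 M2 c t \<alpha> \<longleftrightarrow> M1 c t / (M2 c t * tpr M1 M2 c) = \<alpha>"

definition le_exposed :: "('a::finite) lm \<Rightarrow> 'a lm \<Rightarrow> 'a list \<Rightarrow> 'a \<Rightarrow> real \<Rightarrow> bool" where
  "le_exposed M1 M2 c t \<alpha> \<longleftrightarrow> (\<exists>\<beta>. \<beta> \<le> \<alpha> \<and> exposed M1 M2 c t \<beta>)"

definition proper_avg :: "(real \<Rightarrow> real \<Rightarrow> real) \<Rightarrow> bool" where
  "proper_avg f \<longleftrightarrow> (\<forall>x y. x > 0 \<longrightarrow> y > 0 \<longrightarrow> min x y \<le> f x y \<and> f x y \<le> max x y)"

definition min_bounded :: "(real \<Rightarrow> real \<Rightarrow> real) \<Rightarrow> real \<Rightarrow> bool" where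
  "min_bounded f lam \<longleftrightarrow> proper_avg f \<and>
     (\<forall>x y. x > 0 \<longrightarrow> y > 0 \<longrightarrow> f x y \<le> lam * min x y)"

definition Mf :: "(real \<Rightarrow> real \<Rightarrow> real) \<Rightarrow> ('a::finite) lm \<Rightarrow> 'a lm \<Rightarrow> 'a lm" where
  "Mf f M1 M2 c t = f (rp M1 c t) (rp M2 c t)"

definition DAGG :: "(real \<Rightarrow> real \<Rightarrow> real) \<Rightarrow> ('a::finite) lm \<Rightarrow> 'a lm \<Rightarrow> 'a lm" where
  "DAGG f M1 M2 c t = Mf f M1 M2 c t / (\<Sum>t'\<in>UNIV. Mf f M1 M2 c t')"

definition fbar :: "(real \<Rightarrow> real \<Rightarrow> real) \<Rightarrow> ('a::finite) lm \<Rightarrow> 'a lm \<Rightarrow> 'a list \<Rightarrow> real" where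
  "fbar f M1 M2 c = GM (\<lambda>t. inverse (Mf f M1 M2 c t))"

end

theory Submission
  imports Defs
begin

(* The geometric mean is multiplicative, so the exposure of t by M over M_b is just the
   quotient rp_M(t) / rp_{M_b}(t) of relative probabilities. Relative probabilities do not see
   normalisation, hence for the aggregate they are M(t|c) / GM(M(.|c)) = M(t|c) * fbar.
   Since min-boundedness gives M(t|c) <= lambda_f * min(rp_{M_1}(t), rp_{M_2}(t)), dividing
   by rp_{M_b}(t) yields the exposure bound lambda_f * fbar * min(alpha, beta). *)

lemma GM_pos: "GM g > 0"
  unfolding GM_def by simp

lemma GM_divide:
  fixes g h :: "'a::finite \<Rightarrow> real"
  assumes "\<And>t. g t > 0" and "\<And>t. h t > 0"
  shows "GM (\<lambda>t. g t / h t) = GM g / GM h"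
proof -
  have "(\<Sum>t\<in>UNIV. ln (g t / h t)) = (\<Sum>t\<in>UNIV. ln (g t) - ln (h t))"
    by (intro sum.cong refl ln_divide_pos assms)
  then have "(\<Sum>t\<in>UNIV. ln (g t / h t)) = (\<Sum>t\<in>UNIV. ln (g t)) - (\<Sum>t\<in>UNIV. ln (h t))"
    by (simp add: sum_subtractf)
  then show ?thesis
    unfolding GM_def by (simp add: right_diff_distrib exp_diff)
qed

lemma GM_inverse:
  fixes g :: "'a::finite \<Rightarrow> real"
  assumes "\<And>t. g t > 0"
  shows "GM (\<lambda>t. inverse (g t)) = inverse (GM g)"
proof -
  have "(\<Sum>t\<in>UNIV. ln (inverse (g t))) = - (\<Sum>t\<in>UNIV. ln (g t))"
    using assms by (simp add: ln_inverse sum_negf)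
  then show ?thesis
    unfolding GM_def by (simp add: exp_minus)
qed

lemma GM_const:
  assumes "s > 0"
  shows "GM (\<lambda>_::'a::finite. s) = s"
  using assms unfolding GM_def by (simp add: finite_UNIV_card_ge_0)

lemma GM_divide_const:
  fixes g :: "'a::finite \<Rightarrow> real"
  assumes "\<And>t. g t > 0" and "s > 0"
  shows "GM (\<lambda>t. g t / s) = GM g / s"
  using GM_divide[of g "\<lambda>_. s"] GM_const[of s, where 'a='a] assms by simp

lemma is_LM_pos: "is_LM M \<Longrightarrow> M c t > 0"
  unfolding is_LM_def by blast

lemma rp_pos: "M c t > 0 \<Longrightarrow> rp M c t > 0"
  unfolding rp_def tp_def using GM_pos[of "M c"] by simp

lemma rp_normalized:
  fixes g :: "'a::finite \<Rightarrow> real"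
  assumes "M c = (\<lambda>t. g t / s)" and "\<And>t. g t > 0" and "s > 0"
  shows "rp M c t = g t / GM g"
  using assms GM_divide_const[of g s] GM_pos[of g] unfolding rp_def tp_def by simp

lemma exposed_iff_rp_ratio:
  assumes "\<And>t. M c t > 0" and "\<And>t. Mb c t > 0"
  shows "exposed M Mb c t \<alpha> \<longleftrightarrow> \<alpha> = rp M c t / rp Mb c t"
proof -
  have "tpr M Mb c = tp M c / tp Mb c"
    unfolding tpr_def tp_def using GM_divide[of "M c" "Mb c"] assms by simp
  then have "M c t / (Mb c t * tpr M Mb c) = rp M c t / rp Mb c t"
    unfolding rp_def by simp
  then show ?thesis
    unfolding exposed_def by auto
qed

lemma Mf_pos:
  assumes "proper_avg f" and "M1 c t > 0" and "M2 c t > 0"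
  shows "Mf f M1 M2 c t > 0"
proof -
  have "min (rp M1 c t) (rp M2 c t) \<le> Mf f M1 M2 c t"
    using assms rp_pos unfolding proper_avg_def Mf_def by blast
  then show ?thesis
    using rp_pos[of M1 c t] rp_pos[of M2 c t] assms by linarith
qed

lemma min_bounded_imp_proper_avg: "min_bounded f lam \<Longrightarrow> proper_avg f"
  unfolding min_bounded_def by blast

lemma Mf_le_min_rp:
  assumes "min_bounded f lam" and "M1 c t > 0" and "M2 c t > 0"
  shows "Mf f M1 M2 c t \<le> lam * min (rp M1 c t) (rp M2 c t)"
  using assms rp_pos unfolding min_bounded_def Mf_def by blast

lemma rp_DAGG:
  assumes "proper_avg f" and "\<And>t. M1 c t > 0" and "\<And>t. M2 c t > 0"
  shows "rp (DAGG f M1 M2) c t = Mf f M1 M2 c t * fbar f M1 M2 c"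
proof -
  have m_pos: "\<And>t. Mf f M1 M2 c t > 0"
    using Mf_pos assms by blast
  then have "(\<Sum>t'\<in>UNIV. Mf f M1 M2 c t') > 0"
    by (simp add: sum_pos)
  then have "rp (DAGG f M1 M2) c t = Mf f M1 M2 c t / GM (Mf f M1 M2 c)"
    using m_pos by (intro rp_normalized) (auto simp: DAGG_def)
  also have "\<dots> = Mf f M1 M2 c t * fbar f M1 M2 c"
    unfolding fbar_def using GM_inverse[of "Mf f M1 M2 c"] m_pos by (simp add: divide_inverse)
  finally show ?thesis .
qed

lemma DAGG_pos:
  assumes "proper_avg f" and "\<And>t. M1 c t > 0" and "\<And>t. M2 c t > 0"
  shows "DAGG f M1 M2 c t > 0"
proof -
  have "\<And>t. Mf f M1 M2 c t > 0"
    using Mf_pos assms by blast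
  then show ?thesis
    unfolding DAGG_def by (simp add: sum_pos)
qed

lemma fbar_pos: "fbar f M1 M2 c > 0"
  unfolding fbar_def by (rule GM_pos)

lemma rp_DAGG_le:
  assumes "min_bounded f lam" and "\<And>t. M1 c t > 0" and "\<And>t. M2 c t > 0"
  shows "rp (DAGG f M1 M2) c t \<le> lam * fbar f M1 M2 c * min (rp M1 c t) (rp M2 c t)"
proof -
  have "rp (DAGG f M1 M2) c t = Mf f M1 M2 c t * fbar f M1 M2 c"
    using rp_DAGG min_bounded_imp_proper_avg assms by blast
  also have "\<dots> \<le> lam * min (rp M1 c t) (rp M2 c t) * fbar f M1 M2 c"
    using Mf_le_min_rp[of f lam M1 c t M2] assms fbar_pos[of f M1 M2 c]
    by (simp add: mult_right_mono)
  finally show ?thesis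
    by (simp add: ac_simps)
qed

theorem corollary1:
  fixes M1 M2 Mb :: "('a::finite) lm" and c :: "'a list" and t :: 'a
    and f :: "real \<Rightarrow> real \<Rightarrow> real" and lam \<alpha> \<beta> :: real
  assumes "is_LM M1" and "is_LM M2" and "is_LM Mb"
    and "min_bounded f lam"
    and "exposed M1 Mb c t \<alpha>" and "exposed M2 Mb c t \<beta>"
  shows "le_exposed (DAGG f M1 M2) Mb c t (lam * fbar f M1 M2 c * min \<alpha> \<beta>)"
proof -
  note pos = is_LM_pos[OF assms(1)] is_LM_pos[OF assms(2)] is_LM_pos[OF assms(3)]
  have "exposed (DAGG f M1 M2) Mb c t (rp (DAGG f M1 M2) c t / rp Mb c t)"
    using exposed_iff_rp_ratio DAGG_pos min_bounded_imp_proper_avg[OF assms(4)] pos by blast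
  moreover have "rp (DAGG f M1 M2) c t / rp Mb c t
      \<le> lam * fbar f M1 M2 c * min (rp M1 c t) (rp M2 c t) / rp Mb c t"
    using rp_DAGG_le[OF assms(4)] rp_pos pos by (blast intro: divide_right_mono less_imp_le)
  moreover have "\<alpha> = rp M1 c t / rp Mb c t" and "\<beta> = rp M2 c t / rp Mb c t"
    using assms(5,6) exposed_iff_rp_ratio pos by blast+
  then have "min \<alpha> \<beta> = min (rp M1 c t) (rp M2 c t) / rp Mb c t"
    using rp_pos[of Mb c t] pos by (simp add: min_divide_distrib_right)
  ultimately show ?thesis
    unfolding le_exposed_def by auto
qed

end
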